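(* Fix $0<\beta<1$. For every general channel $\mathbf W$, every sequence of cost functions $\mathbf c=\{c_n\}$ and every $K$ with $\mathcal X_{n,c,K}\ne\emptyset$ for all $n$, and all reals $R_1,R_2$, \[ C_p(R_2,R_1\mid\mathbf W,\mathbf c,K)=\inf_{\mathbf P\in\mathcal P_{c,K}}\lim_{\gamma\downarrow0}I_p(R_2-\gamma,R_1\mid\mathbf P,\mathbf W)=\inf_{\mathbf P\in\mathcal P_{c,K}}\sup_{\mathbf Q}\lim_{\gamma\downarrow0}J_p(R_2-\gamma,R_1\mid\mathbf P,\mathbf Q,\mathbf W), \] and for every $0\le\epsilon<1$, \[ C(\epsilon,R_1\mid\mathbf W,\mathbf c,K)=\sup_{\mathbf P\in\mathcal P_{c,K}}I(\epsilon,R_1\mid\mathbf P,\mathbf W)=\sup_{\mathbf P\in\mathcal P_{c,K}}\inf_{\mathbf Q}J(\epsilon,R_1\mid\mathbf P,\mathbf Q,\mathbf W). \]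
   Context: A general channel $\mathbf W=\{W^n\}$: finite (or countable) sets $\mathcal X_n,\mathcal Y_n$, distributions $W^n_x$ on $\mathcal Y_n$. $c_n:\mathcal X_n\to\mathbb R$; $\mathcal X_{n,c,K}=\{x\in\mathcal X_n:c_n(x)\le nK\}$. $\mathcal P_{c,K}$ is the set of sequences $\mathbf P=\{P^n\}$ of distributions on $\mathcal X_n$ with $\mathrm{supp}(P^n)\subset\mathcal X_{n,c,K}$; $\mathbf Q=\{Q^n\}$ ranges over sequences of distributions on $\mathcal Y_n$; $W^n_{P^n}=\sum_xP^n(x)W^n_x$; logs natural. $I_p(R_2,R_1|\mathbf P,\mathbf W)=\limsup_n\sum_xP^n(x)W^n_x\{\frac1{n^\beta}(\log\frac{W^n_x(y)}{W^n_{P^n}(y)}-nR_1)<R_2\}$, $I(\epsilon,R_1|\mathbf P,\mathbf W)=\sup\{R_2:I_p(R_2,R_1|\mathbf P,\mathbf W)\le\epsilon\}$; $J_p,J$ are the same with $W^n_{P^n}$ replaced by $Q^n$. A code $\Phi=(N,\phi,\{\mathcal D_i\})$ for $W^n$: $\phi:\{1..N\}\to\mathcal X_n$, disjoint $\mathcal D_i\subset\mathcal Y_n$, $|\Phi|=N$, $\mathrm{supp}(\Phi)=\{\phi(i)\}$, $P_{e,W^n}(\Phi)=\frac1N\sum_i(1-W^n_{\phi(i)}(\mathcal D_i))$. Over code sequences with $\mathrm{supp}(\Phi_n)\subset\mathcal X_{n,c,K}$: $C_p(R_2,R_1|\mathbf W,\mathbf c,K)=\inf\{\limsup_nP_{e,W^n}(\Phi_n):\liminf_n\frac1{n^\beta}(\log|\Phi_n|-nR_1)\ge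 R_2\}$, $C(\epsilon,R_1|\mathbf W,\mathbf c,K)=\sup\{\liminf_n\frac1{n^\beta}(\log|\Phi_n|-nR_1):\limsup_nP_{e,W^n}(\Phi_n)\le\epsilon\}$. *)

theory Defs
  imports "HOL-Probability.Probability"
begin

text \<open>General channel: W n x is the output distribution W^n_x on a countable output type;
  input alphabet X n (a subset of a countable type); cost c n; exponent beta.\<close>

definition Xnck :: "(nat \<Rightarrow> 'x set) \<Rightarrow> (nat \<Rightarrow> 'x \<Rightarrow> real) \<Rightarrow> real \<Rightarrow> nat \<Rightarrow> 'x set" where
  "Xnck X c K n = {x \<in> X n. c n x \<le> real n * K}"

definition Pck :: "(nat \<Rightarrow> 'x set) \<Rightarrow> (nat \<Rightarrow> 'x \<Rightarrow> real) \<Rightarrow> real \<Rightarrow> (nat \<Rightarrow> 'x pmf) set" where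
  "Pck X c K = {P. \<forall>n. set_pmf (P n) \<subseteq> Xnck X c K n}"

text \<open>The event {y : n^(-beta) (log (Wx(y)/Q(y)) - n R1) < R2}; outputs with Q(y) = 0 have
  information density +infinity and hence are excluded.\<close>
definition dens_event :: "real \<Rightarrow> nat \<Rightarrow> real \<Rightarrow> real \<Rightarrow> 'y pmf \<Rightarrow> 'y pmf \<Rightarrow> 'y set" where
  "dens_event \<beta> n R2 R1 Wx Q =
     {y. pmf Q y > 0 \<and> (ln (pmf Wx y / pmf Q y) - real n * R1) / (real n powr \<beta>) < R2}"

definition Jp :: "real \<Rightarrow> (nat \<Rightarrow> 'x \<Rightarrow> 'y pmf) \<Rightarrow> (nat \<Rightarrow> 'x pmf) \<Rightarrow> (nat \<Rightarrow> 'y pmf)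
                   \<Rightarrow> real \<Rightarrow> real \<Rightarrow> ereal" where
  "Jp \<beta> W P Q R2 R1 = limsup (\<lambda>n. ereal (measure_pmf.expectation (P n)
      (\<lambda>x. measure_pmf.prob (W n x) (dens_event \<beta> n R2 R1 (W n x) (Q n)))))"

definition out_dist :: "(nat \<Rightarrow> 'x \<Rightarrow> 'y pmf) \<Rightarrow> (nat \<Rightarrow> 'x pmf) \<Rightarrow> nat \<Rightarrow> 'y pmf" where
  "out_dist W P n = bind_pmf (P n) (W n)"

definition Ip :: "real \<Rightarrow> (nat \<Rightarrow> 'x \<Rightarrow> 'y pmf) \<Rightarrow> (nat \<Rightarrow> 'x pmf) \<Rightarrow> real \<Rightarrow> real \<Rightarrow> ereal" where
  "Ip \<beta> W P R2 R1 = Jp \<beta> W P (out_dist W P) R2 R1"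

definition Ieps :: "real \<Rightarrow> (nat \<Rightarrow> 'x \<Rightarrow> 'y pmf) \<Rightarrow> (nat \<Rightarrow> 'x pmf) \<Rightarrow> real \<Rightarrow> real \<Rightarrow> ereal" where
  "Ieps \<beta> W P \<epsilon> R1 = Sup (ereal ` {R2. Ip \<beta> W P R2 R1 \<le> ereal \<epsilon>})"

definition Jeps :: "real \<Rightarrow> (nat \<Rightarrow> 'x \<Rightarrow> 'y pmf) \<Rightarrow> (nat \<Rightarrow> 'x pmf) \<Rightarrow> (nat \<Rightarrow> 'y pmf)
                     \<Rightarrow> real \<Rightarrow> real \<Rightarrow> ereal" where
  "Jeps \<beta> W P Q \<epsilon> R1 = Sup (ereal ` {R2. Jp \<beta> W P Q R2 R1 \<le> ereal \<epsilon>})"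

text \<open>A code (N, phi, D): messages 1..N, encoder phi, decoding sets D i.\<close>
type_synonym ('x, 'y) code = "nat \<times> (nat \<Rightarrow> 'x) \<times> (nat \<Rightarrow> 'y set)"

definition code_size :: "('x, 'y) code \<Rightarrow> nat" where
  "code_size \<Phi> = fst \<Phi>"

definition is_code_in :: "'x set \<Rightarrow> ('x, 'y) code \<Rightarrow> bool" where
  "is_code_in S \<Phi> = (case \<Phi> of (N, \<phi>, D) \<Rightarrow>
      N \<ge> 1 \<and> \<phi> ` {1..N} \<subseteq> S \<and>
      (\<forall>i\<in>{1..N}. \<forall>j\<in>{1..N}. i \<noteq> j \<longrightarrow> D i \<inter> D j = {}))"

definition err_prob :: "('x \<Rightarrow> 'y pmf) \<Rightarrow> ('x, 'y) code \<Rightarrow> real" where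
  "err_prob Wn \<Phi> = (case \<Phi> of (N, \<phi>, D) \<Rightarrow>
      (\<Sum>i=1..N. 1 - measure_pmf.prob (Wn (\<phi> i)) (D i)) / real N)"

definition code_rate :: "real \<Rightarrow> real \<Rightarrow> (nat \<Rightarrow> ('x, 'y) code) \<Rightarrow> ereal" where
  "code_rate \<beta> R1 \<Phi> = liminf (\<lambda>n. ereal ((ln (real (code_size (\<Phi> n))) - real n * R1) / (real n powr \<beta>)))"

definition code_err :: "(nat \<Rightarrow> 'x \<Rightarrow> 'y pmf) \<Rightarrow> (nat \<Rightarrow> ('x, 'y) code) \<Rightarrow> ereal" where
  "code_err W \<Phi> = limsup (\<lambda>n. ereal (err_prob (W n) (\<Phi> n)))"

definition admissible_codes :: "(nat \<Rightarrow> 'x set) \<Rightarrow> (nat \<Rightarrow> 'x \<Rightarrow> real) \<Rightarrow> real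
                                 \<Rightarrow> (nat \<Rightarrow> ('x, 'y) code) set" where
  "admissible_codes X c K = {\<Phi>. \<forall>n. is_code_in (Xnck X c K n) (\<Phi> n)}"

definition Cp :: "real \<Rightarrow> (nat \<Rightarrow> 'x \<Rightarrow> 'y pmf) \<Rightarrow> (nat \<Rightarrow> 'x set) \<Rightarrow> (nat \<Rightarrow> 'x \<Rightarrow> real) \<Rightarrow> real
                   \<Rightarrow> real \<Rightarrow> real \<Rightarrow> ereal" where
  "Cp \<beta> W X c K R2 R1 = Inf {code_err W \<Phi> | \<Phi>.
      \<Phi> \<in> admissible_codes X c K \<and> code_rate \<beta> R1 \<Phi> \<ge> ereal R2}"

definition Ceps :: "real \<Rightarrow> (nat \<Rightarrow> 'x \<Rightarrow> 'y pmf) \<Rightarrow> (nat \<Rightarrow> 'x set) \<Rightarrow> (nat \<Rightarrow> 'x \<Rightarrow> real) \<Rightarrow> real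
                   \<Rightarrow> real \<Rightarrow> real \<Rightarrow> ereal" where
  "Ceps \<beta> W X c K \<epsilon> R1 = Sup {code_rate \<beta> R1 \<Phi> | \<Phi>.
      \<Phi> \<in> admissible_codes X c K \<and> code_err W \<Phi> \<le> ereal \<epsilon>}"

end

theory Submission
  imports Defs
begin

text \<open>
  Achievability rests on Feinstein's lemma:
  a greedy construction gives, for any input distribution \<open>p\<close> and threshold \<open>a\<close>, a code with
  \<open>M\<close> codewords from the support of \<open>p\<close> whose maximal error is at most the probability of the
  information density falling below \<open>a\<close> plus \<open>M e\<^sup>-\<^sup>a\<close>.  The converse is the Verd\'u--Han bound:
  for every code and every output distribution \<open>Q\<close>, the average probability (under the uniform
  distribution on the codewords) of low information density w.r.t. \<open>Q\<close> is at most the error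
  probability plus \<open>e\<^sup>c/N\<close>.  Both bounds are first proved for a fixed blocklength, then turned
  into asymptotic statements with the normalisation \<open>n\<^sup>\<beta>\<close>; a diagonal choice of the slack
  \<open>\<gamma> \<down> 0\<close> handles the limit \<open>\<gamma> \<down> 0\<close> in the optimal-error formula.  Finally the two
  characterisations (optimal error \<open>Cp\<close> and \<open>\<epsilon>\<close>-capacity \<open>Ceps\<close>) follow by sandwiching
  \<open>Ip\<close> between the code quantities and the \<open>Jp\<close> quantities, using that \<open>Ip\<close> is \<open>Jp\<close> at the
  output distribution \<open>Q = W\<^sub>P\<close>.
\<close>

lemma integrable_prob_pmf [simp]:
  "integrable (measure_pmf p) (\<lambda>x. measure_pmf.prob (V x) (A x))"
  by (rule measure_pmf.integrable_const_bound[where B=1]) auto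

lemma prob_bind_pmf:
  "measure_pmf.prob (bind_pmf p V) A = measure_pmf.expectation p (\<lambda>x. measure_pmf.prob (V x) A)"
proof -
  have "emeasure (measure_pmf (bind_pmf p V)) A
      = (\<integral>\<^sup>+x. emeasure (measure_pmf (V x)) A \<partial>measure_pmf p)"
    by simp
  also have "\<dots> = (\<integral>\<^sup>+x. ennreal (measure_pmf.prob (V x) A) \<partial>measure_pmf p)"
    by (simp add: measure_pmf.emeasure_eq_measure)
  also have "\<dots> = ennreal (measure_pmf.expectation p (\<lambda>x. measure_pmf.prob (V x) A))"
    by (rule nn_integral_eq_integral) auto
  finally show ?thesis
    by (simp add: measure_pmf.emeasure_eq_measure integral_nonneg_AE)
qed

lemma expectation_le_const:
  fixes f :: "'a \<Rightarrow> real"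
  assumes "integrable (measure_pmf p) f" "\<And>x. x \<in> set_pmf p \<Longrightarrow> f x \<le> c"
  shows "measure_pmf.expectation p f \<le> c"
proof -
  have "measure_pmf.expectation p f \<le> measure_pmf.expectation p (\<lambda>_. c)"
    by (rule integral_mono_AE) (use assms in \<open>auto simp: AE_measure_pmf_iff\<close>)
  thus ?thesis by simp
qed

lemma prob_le_scaled:
  assumes "\<And>y. y \<in> A \<Longrightarrow> pmf q y \<le> c * pmf p y" "0 \<le> c"
  shows "measure_pmf.prob q A \<le> c * measure_pmf.prob p A"
proof -
  have "infsetsum (pmf q) A \<le> infsetsum (\<lambda>y. c * pmf p y) A"
    by (rule infsetsum_mono) (use assms in \<open>auto intro: abs_summable_on_cmult_right\<close>)
  also have "\<dots> = c * infsetsum (pmf p) A"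
    by (rule infsetsum_cmult_right) auto
  finally show ?thesis by (simp add: measure_pmf_conv_infsetsum)
qed

lemma prob_mono_set_pmf:
  assumes "A \<inter> set_pmf p \<subseteq> B"
  shows "measure_pmf.prob p A \<le> measure_pmf.prob p B"
proof -
  have "measure_pmf.prob p A = measure_pmf.prob p (A \<inter> set_pmf p)"
    by (simp add: measure_Int_set_pmf)
  also have "\<dots> \<le> measure_pmf.prob p B"
    by (rule measure_pmf.finite_measure_mono) (use assms in auto)
  finally show ?thesis .
qed

lemma prob_compl_pmf: "measure_pmf.prob p (- A) = 1 - measure_pmf.prob p A"
  using measure_pmf.prob_compl[of A p] by (simp add: Compl_eq_Diff_UNIV)

subsection \<open>The information spectrum at a fixed blocklength\<close>

definition spectrum_prob ::
  "real \<Rightarrow> ('x \<Rightarrow> 'y pmf) \<Rightarrow> 'x pmf \<Rightarrow> 'y pmf \<Rightarrow> nat \<Rightarrow> real \<Rightarrow> real \<Rightarrow> real" where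
  "spectrum_prob \<beta> V p q n t R1 =
     measure_pmf.expectation p (\<lambda>x. measure_pmf.prob (V x) (dens_event \<beta> n t R1 (V x) q))"

lemma Jp_spectrum_prob:
  "Jp \<beta> W P Q t R1 = limsup (\<lambda>n. ereal (spectrum_prob \<beta> (W n) (P n) (Q n) n t R1))"
  unfolding Jp_def spectrum_prob_def ..

lemma spectrum_prob_nonneg: "0 \<le> spectrum_prob \<beta> V p q n t R1"
  unfolding spectrum_prob_def by (rule integral_nonneg_AE) auto

lemma spectrum_prob_mono:
  assumes "t \<le> t'"
  shows "spectrum_prob \<beta> V p q n t R1 \<le> spectrum_prob \<beta> V p q n t' R1"
  unfolding spectrum_prob_def
proof (rule integral_mono)
  fix x
  show "measure_pmf.prob (V x) (dens_event \<beta> n t R1 (V x) q)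
      \<le> measure_pmf.prob (V x) (dens_event \<beta> n t' R1 (V x) q)"
    by (rule measure_pmf.finite_measure_mono) (use assms in \<open>auto simp: dens_event_def\<close>)
qed auto

lemma Jp_mono:
  assumes "t \<le> t'"
  shows "Jp \<beta> W P Q t R1 \<le> Jp \<beta> W P Q t' R1"
  unfolding Jp_spectrum_prob
  by (intro Limsup_mono always_eventually allI ereal_less_eq(3)[THEN iffD2] spectrum_prob_mono assms)

lemma dens_event_bound:
  assumes n: "n \<ge> 1" and y: "y \<in> dens_event \<beta> n t R1 Wx Q" and pos: "pmf Wx y > 0"
  shows "pmf Wx y \<le> exp (real n * R1 + t * real n powr \<beta>) * pmf Q y"
proof -
  have b: "real n powr \<beta> > 0" using n by simp
  have q: "pmf Q y > 0"
    and "(ln (pmf Wx y / pmf Q y) - real n * R1) / real n powr \<beta> < t"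
    using y unfolding dens_event_def by auto
  hence "ln (pmf Wx y / pmf Q y) < real n * R1 + t * real n powr \<beta>"
    using b by (simp add: divide_less_eq)
  moreover have "exp (ln (pmf Wx y / pmf Q y)) = pmf Wx y / pmf Q y" using pos q by simp
  ultimately have "pmf Wx y / pmf Q y < exp (real n * R1 + t * real n powr \<beta>)"
    by (metis exp_less_cancel_iff)
  thus ?thesis using q by (simp add: divide_less_eq less_imp_le)
qed

lemma low_density_in_dens_event:
  assumes n: "n \<ge> 1" and a: "a < real n * R1 + t * real n powr \<beta>"
    and py: "pmf Wx y > 0" and qy: "pmf Q y > 0" and le: "pmf Wx y \<le> exp a * pmf Q y"
  shows "y \<in> dens_event \<beta> n t R1 Wx Q"
proof -
  have b: "real n powr \<beta> > 0" using n by simp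
  have "pmf Wx y / pmf Q y \<le> exp a" using le qy by (simp add: divide_le_eq)
  hence "ln (pmf Wx y / pmf Q y) \<le> ln (exp a)" using py qy by (subst ln_le_cancel_iff) auto
  hence "ln (pmf Wx y / pmf Q y) \<le> a" by simp
  hence "ln (pmf Wx y / pmf Q y) - real n * R1 < t * real n powr \<beta>" using a by linarith
  thus ?thesis unfolding dens_event_def using qy b by (simp add: divide_less_eq)
qed

subsection \<open>Feinstein's lemma\<close>

definition low_density_prob :: "'x pmf \<Rightarrow> ('x \<Rightarrow> 'y pmf) \<Rightarrow> real \<Rightarrow> real" where
  "low_density_prob p V a = measure_pmf.expectation p
     (\<lambda>x. measure_pmf.prob (V x) {y. pmf (V x) y \<le> exp a * pmf (bind_pmf p V) y})"

lemma mixture_prob_decoding_sets: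
  fixes V :: "'x \<Rightarrow> 'y pmf" and q :: "'y pmf"
  assumes sub: "\<And>i. i \<in> {1..m} \<Longrightarrow> D i \<subseteq> {y. exp a * pmf q y < pmf (V (\<phi> i)) y}"
  shows "measure_pmf.prob q (\<Union>i\<in>{1..m}. D i) \<le> real m * exp (-a)"
proof -
  have "measure_pmf.prob q (\<Union>i\<in>{1..m}. D i) \<le> (\<Sum>i\<in>{1..m}. measure_pmf.prob q (D i))"
    by (rule measure_subadditive_finite) (auto simp: measure_pmf.emeasure_finite)
  also have "\<dots> \<le> (\<Sum>i\<in>{1..m}. exp (-a) * measure_pmf.prob (V (\<phi> i)) (D i))"
  proof (rule sum_mono)
    fix i assume i: "i \<in> {1..m}"
    show "measure_pmf.prob q (D i) \<le> exp (-a) * measure_pmf.prob (V (\<phi> i)) (D i)"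
    proof (rule prob_le_scaled)
      fix y assume "y \<in> D i"
      hence "exp a * pmf q y < pmf (V (\<phi> i)) y" using sub[OF i] by auto
      thus "pmf q y \<le> exp (-a) * pmf (V (\<phi> i)) y" by (simp add: exp_minus field_simps)
    qed simp
  qed
  also have "\<dots> \<le> (\<Sum>i\<in>{1..m}. exp (-a))"
    by (rule sum_mono) simp
  finally show ?thesis by simp
qed

text \<open>Otherwise averaging over \<open>p\<close> contradicts the bound
  \<open>m e\<^sup>-\<^sup>a\<close> on the mixture probability of the union of the decoding sets.\<close>
lemma feinstein_step:
  fixes p :: "'x pmf" and V :: "'x \<Rightarrow> 'y pmf" and a :: real and M m :: nat
  defines "q \<equiv> bind_pmf p V"
  defines "B \<equiv> (\<lambda>x. {y. exp a * pmf q y < pmf (V x) y})"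
  defines "\<epsilon> \<equiv> low_density_prob p V a + real M * exp (-a)"
  assumes mM: "m < M"
    and sub: "\<And>i. i \<in> {1..m} \<Longrightarrow> D i \<subseteq> B (\<phi> i)"
  shows "\<exists>x\<in>set_pmf p. 1 - \<epsilon> \<le> measure_pmf.prob (V x) (B x - (\<Union>i\<in>{1..m}. D i))"
proof (rule ccontr)
  define U where "U = (\<Union>i\<in>{1..m}. D i)"
  define bad where "bad = (\<lambda>x. measure_pmf.prob (V x) {y. pmf (V x) y \<le> exp a * pmf q y})"
  assume "\<not> ?thesis"
  hence lt: "\<And>x. x \<in> set_pmf p \<Longrightarrow> measure_pmf.prob (V x) (B x - U) \<le> 1 - \<epsilon>"
    unfolding U_def by force
  have split_B: "1 - bad x \<le> measure_pmf.prob (V x) (B x - U) + measure_pmf.prob (V x) U" for x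
  proof -
    have "-B x = {y. pmf (V x) y \<le> exp a * pmf q y}"
      unfolding B_def by auto
    hence "1 - bad x = measure_pmf.prob (V x) (B x)"
      using prob_compl_pmf[of "V x" "B x"] unfolding bad_def by simp
    also have "\<dots> \<le> measure_pmf.prob (V x) ((B x - U) \<union> U)"
      by (rule measure_pmf.finite_measure_mono) auto
    also have "\<dots> \<le> measure_pmf.prob (V x) (B x - U) + measure_pmf.prob (V x) U"
      by (rule measure_Un_le) auto
    finally show ?thesis .
  qed
  have qU: "measure_pmf.prob q U \<le> real m * exp (-a)"
    unfolding U_def by (rule mixture_prob_decoding_sets[where V=V and \<phi>=\<phi>]) (use sub in \<open>auto simp: B_def\<close>)
  have "1 - measure_pmf.expectation p bad = measure_pmf.expectation p (\<lambda>x. 1 - bad x)"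
    unfolding bad_def by (subst Bochner_Integration.integral_diff) auto
  also have "\<dots> \<le> measure_pmf.expectation p
      (\<lambda>x. measure_pmf.prob (V x) (B x - U) + measure_pmf.prob (V x) U)"
    by (rule integral_mono) (use split_B in \<open>auto simp: bad_def\<close>)
  also have "\<dots> = measure_pmf.expectation p (\<lambda>x. measure_pmf.prob (V x) (B x - U))
      + measure_pmf.prob q U"
    unfolding q_def prob_bind_pmf by (subst Bochner_Integration.integral_add) auto
  also have "\<dots> \<le> (1 - \<epsilon>) + real m * exp (-a)"
    by (rule add_mono[OF expectation_le_const qU]) (use lt in auto)
  finally have "\<epsilon> \<le> measure_pmf.expectation p bad + real m * exp (-a)" by simp
  moreover have "real m * exp (-a) < real M * exp (-a)" using mM by simp
  ultimately show False unfolding \<epsilon>_def bad_def low_density_prob_def q_def by simp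
qed

lemma feinstein_greedy:
  fixes p :: "'x pmf" and V :: "'x \<Rightarrow> 'y pmf" and a :: real and M m :: nat
  defines "B \<equiv> (\<lambda>x. {y. exp a * pmf (bind_pmf p V) y < pmf (V x) y})"
  defines "\<epsilon> \<equiv> low_density_prob p V a + real M * exp (-a)"
  assumes "m \<le> M"
  shows "\<exists>\<phi> D. \<phi> ` {1..m} \<subseteq> set_pmf p \<and> (\<forall>i\<in>{1..m}. D i \<subseteq> B (\<phi> i))
      \<and> (\<forall>i\<in>{1..m}. \<forall>j\<in>{1..m}. i \<noteq> j \<longrightarrow> D i \<inter> D j = {})
      \<and> (\<forall>i\<in>{1..m}. 1 - \<epsilon> \<le> measure_pmf.prob (V (\<phi> i)) (D i))"
  using assms(3)
proof (induction m)
  case 0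
  show ?case by auto
next
  case (Suc m)
  then obtain \<phi> D where img: "\<phi> ` {1..m} \<subseteq> set_pmf p" and sub: "\<forall>i\<in>{1..m}. D i \<subseteq> B (\<phi> i)"
    and disj: "\<forall>i\<in>{1..m}. \<forall>j\<in>{1..m}. i \<noteq> j \<longrightarrow> D i \<inter> D j = {}"
    and good: "\<forall>i\<in>{1..m}. 1 - \<epsilon> \<le> measure_pmf.prob (V (\<phi> i)) (D i)"
    by auto
  define U where "U = (\<Union>i\<in>{1..m}. D i)"
  obtain x where x: "x \<in> set_pmf p" "1 - \<epsilon> \<le> measure_pmf.prob (V x) (B x - U)"
    using feinstein_step[where m=m and M=M and D=D and \<phi>=\<phi> and p=p and V=V and a=a] sub Suc.prems
    unfolding \<epsilon>_def B_def U_def by auto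
  define \<phi>' where "\<phi>' = \<phi>(Suc m := x)"
  define D' where "D' = D(Suc m := B x - U)"
  have range: "i \<in> {1..Suc m} \<longleftrightarrow> i \<in> {1..m} \<or> i = Suc m" for i by auto
  have new_disj: "D' (Suc m) \<inter> D' j = {}" if "j \<in> {1..m}" for j
    using that unfolding D'_def U_def by auto
  show ?case
  proof (intro exI[of _ \<phi>'] exI[of _ D'] conjI ballI impI)
    show "\<phi>' ` {1..Suc m} \<subseteq> set_pmf p" using img x(1) unfolding \<phi>'_def range by auto
  next
    fix i assume "i \<in> {1..Suc m}"
    thus "D' i \<subseteq> B (\<phi>' i)" using sub unfolding \<phi>'_def D'_def range by auto
  next
    fix i j assume "i \<in> {1..Suc m}" "j \<in> {1..Suc m}" "i \<noteq> j"
    then consider "i \<in> {1..m}" "j \<in> {1..m}" | "i = Suc m" "j \<in> {1..m}" | "i \<in> {1..m}" "j = Suc m"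
      unfolding range by blast
    thus "D' i \<inter> D' j = {}"
    proof cases
      case 1
      thus ?thesis using disj \<open>i \<noteq> j\<close> by (simp add: D'_def)
    qed (use new_disj in blast)+
  next
    fix i assume "i \<in> {1..Suc m}"
    thus "1 - \<epsilon> \<le> measure_pmf.prob (V (\<phi>' i)) (D' i)"
      using good x(2) unfolding \<phi>'_def D'_def range by auto
  qed
qed

lemma feinstein:
  fixes p :: "'x pmf" and V :: "'x \<Rightarrow> 'y pmf" and a :: real and M :: nat
  shows "\<exists>\<phi> D. \<phi> ` {1..M} \<subseteq> set_pmf p
           \<and> (\<forall>i\<in>{1..M}. \<forall>j\<in>{1..M}. i \<noteq> j \<longrightarrow> D i \<inter> D j = {})
           \<and> (\<forall>i\<in>{1..M}. 1 - (low_density_prob p V a + real M * exp (-a))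
                \<le> measure_pmf.prob (V (\<phi> i)) (D i))"
  using feinstein_greedy[where m=M and M=M and p=p and V=V and a=a] by blast

subsection \<open>The Verd\'u--Han converse bound\<close>

text \<open>For a code with \<open>N\<close> codewords and any output law \<open>Q\<close>, the average probability of the
  low-density events \<open>{pmf (V (\<phi> i)) \<le> e\<^sup>c Q}\<close> is at most the error probability plus \<open>e\<^sup>c / N\<close>,
  because the decoding sets are disjoint and so their total \<open>Q\<close>-probability is at most one.\<close>
lemma verdu_han_bound:
  fixes V :: "'x \<Rightarrow> 'y pmf" and Q :: "'y pmf" and N :: nat and c :: real
  assumes N: "N \<ge> 1"
    and disj: "\<forall>i\<in>{1..N}. \<forall>j\<in>{1..N}. i \<noteq> j \<longrightarrow> D i \<inter> D j = {}"
  shows "(\<Sum>i=1..N. measure_pmf.prob (V (\<phi> i)) {y. pmf (V (\<phi> i)) y \<le> exp c * pmf Q y}) / real N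
           \<le> err_prob V (N, \<phi>, D) + exp c / real N"
proof -
  define L where "L = (\<lambda>i. {y. pmf (V (\<phi> i)) y \<le> exp c * pmf Q y})"
  have one: "measure_pmf.prob (V (\<phi> i)) (L i)
      \<le> (1 - measure_pmf.prob (V (\<phi> i)) (D i)) + exp c * measure_pmf.prob Q (D i)" for i
  proof -
    have "measure_pmf.prob (V (\<phi> i)) (L i) \<le> measure_pmf.prob (V (\<phi> i)) (- D i \<union> (L i \<inter> D i))"
      by (rule measure_pmf.finite_measure_mono) auto
    also have "\<dots> \<le> measure_pmf.prob (V (\<phi> i)) (- D i) + measure_pmf.prob (V (\<phi> i)) (L i \<inter> D i)"
      by (rule measure_Un_le) auto
    also have "measure_pmf.prob (V (\<phi> i)) (L i \<inter> D i) \<le> exp c * measure_pmf.prob Q (L i \<inter> D i)"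
      by (rule prob_le_scaled) (auto simp: L_def)
    also have "\<dots> \<le> exp c * measure_pmf.prob Q (D i)"
      by (intro mult_left_mono measure_pmf.finite_measure_mono) auto
    finally show ?thesis by (simp add: prob_compl_pmf)
  qed
  have "(\<Sum>i=1..N. measure_pmf.prob Q (D i)) = measure_pmf.prob Q (\<Union>i\<in>{1..N}. D i)"
    by (rule measure_finite_Union[symmetric])
       (use disj in \<open>auto simp: disjoint_family_on_def measure_pmf.emeasure_finite\<close>)
  also have "\<dots> \<le> 1" by simp
  finally have total: "(\<Sum>i=1..N. measure_pmf.prob Q (D i)) \<le> 1" .
  have "(\<Sum>i=1..N. measure_pmf.prob (V (\<phi> i)) (L i))
       \<le> (\<Sum>i=1..N. 1 - measure_pmf.prob (V (\<phi> i)) (D i)) + exp c * (\<Sum>i=1..N. measure_pmf.prob Q (D i))"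
    using sum_mono[of "{1..N}", OF one] by (simp add: sum.distrib sum_distrib_left)
  also have "\<dots> \<le> (\<Sum>i=1..N. 1 - measure_pmf.prob (V (\<phi> i)) (D i)) + exp c"
    using total by simp
  finally have "(\<Sum>i=1..N. measure_pmf.prob (V (\<phi> i)) (L i)) / real N
      \<le> ((\<Sum>i=1..N. 1 - measure_pmf.prob (V (\<phi> i)) (D i)) + exp c) / real N"
    using N by (intro divide_right_mono) auto
  thus ?thesis unfolding err_prob_def L_def by (simp add: add_divide_distrib)
qed

definition codeword_pmf :: "('x, 'y) code \<Rightarrow> 'x pmf" where
  "codeword_pmf \<Phi> = map_pmf (fst (snd \<Phi>)) (pmf_of_set {1..fst \<Phi>})"

lemma converse_blocklength:
  fixes V :: "'x \<Rightarrow> 'y pmf" and Q :: "'y pmf" and N :: nat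
  assumes n: "n \<ge> 1" and code: "is_code_in S (N, \<phi>, D)"
  shows "spectrum_prob \<beta> V (codeword_pmf (N, \<phi>, D)) Q n t R1
         \<le> err_prob V (N, \<phi>, D) + exp (real n * R1 + t * real n powr \<beta>) / real N"
proof -
  define c where "c = real n * R1 + t * real n powr \<beta>"
  have N: "N \<ge> 1" and disj: "\<forall>i\<in>{1..N}. \<forall>j\<in>{1..N}. i \<noteq> j \<longrightarrow> D i \<inter> D j = {}"
    using code unfolding is_code_in_def by auto
  have "spectrum_prob \<beta> V (codeword_pmf (N, \<phi>, D)) Q n t R1
      = (\<Sum>i=1..N. measure_pmf.prob (V (\<phi> i)) (dens_event \<beta> n t R1 (V (\<phi> i)) Q)) / real N"
    using N by (simp add: spectrum_prob_def codeword_pmf_def integral_pmf_of_set)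
  also have "\<dots> \<le> (\<Sum>i=1..N. measure_pmf.prob (V (\<phi> i)) {y. pmf (V (\<phi> i)) y \<le> exp c * pmf Q y}) / real N"
  proof (intro divide_right_mono sum_mono prob_mono_set_pmf subsetI)
    fix i y assume "y \<in> dens_event \<beta> n t R1 (V (\<phi> i)) Q \<inter> set_pmf (V (\<phi> i))"
    thus "y \<in> {y. pmf (V (\<phi> i)) y \<le> exp c * pmf Q y}"
      using dens_event_bound[OF n, of y \<beta> t R1 "V (\<phi> i)" Q] pmf_positive[of y "V (\<phi> i)"]
      unfolding c_def by auto
  qed simp
  also have "\<dots> \<le> err_prob V (N, \<phi>, D) + exp c / real N"
    by (rule verdu_han_bound[OF N disj])
  finally show ?thesis unfolding c_def .
qed

lemma single_codeword_code:
  assumes "x0 \<in> S"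
  shows "is_code_in S (1, \<lambda>_. x0, \<lambda>_. UNIV)"
  using assms by (auto simp: is_code_in_def)

lemma err_prob_le_max:
  assumes "N \<ge> 1" and "\<forall>i\<in>{1..N}. 1 - \<epsilon> \<le> measure_pmf.prob (V (\<phi> i)) (D i)"
  shows "err_prob V (N, \<phi>, D) \<le> \<epsilon>"
proof -
  have "(\<Sum>i=1..N. 1 - measure_pmf.prob (V (\<phi> i)) (D i)) \<le> (\<Sum>i=1..N. \<epsilon>)"
  proof (rule sum_mono)
    fix i assume "i \<in> {1..N}"
    hence "1 - \<epsilon> \<le> measure_pmf.prob (V (\<phi> i)) (D i)" using assms(2) by blast
    thus "1 - measure_pmf.prob (V (\<phi> i)) (D i) \<le> \<epsilon>" by linarith
  qed
  thus ?thesis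
    unfolding err_prob_def using assms(1) by (simp add: pos_divide_le_eq mult.commute)
qed

lemma low_density_prob_le_spectrum:
  assumes n: "n \<ge> 1" and a: "a < real n * R1 + s * real n powr \<beta>"
  shows "low_density_prob p V a \<le> spectrum_prob \<beta> V p (bind_pmf p V) n s R1"
  unfolding low_density_prob_def spectrum_prob_def
proof (rule integral_mono_AE)
  show "AE x in measure_pmf p. measure_pmf.prob (V x) {y. pmf (V x) y \<le> exp a * pmf (bind_pmf p V) y}
      \<le> measure_pmf.prob (V x) (dens_event \<beta> n s R1 (V x) (bind_pmf p V))"
  proof (unfold AE_measure_pmf_iff, intro ballI prob_mono_set_pmf subsetI)
    fix x y assume x: "x \<in> set_pmf p"
      and y: "y \<in> {y. pmf (V x) y \<le> exp a * pmf (bind_pmf p V) y} \<inter> set_pmf (V x)"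
    have "y \<in> set_pmf (bind_pmf p V)" using x y by auto
    hence qy: "pmf (bind_pmf p V) y > 0" by (simp add: pmf_positive)
    have py: "pmf (V x) y > 0" using y by (simp add: pmf_positive)
    show "y \<in> dens_event \<beta> n s R1 (V x) (bind_pmf p V)"
      by (rule low_density_in_dens_event[OF n a py qy]) (use y in auto)
  qed
qed auto

text \<open>Rounding \<open>e\<^sup>E\<close> down to a number of codewords costs at most \<open>ln 2 < 1\<close> in the logarithm.\<close>
lemma floor_exp_bounds:
  assumes "0 \<le> E"
  shows "1 \<le> nat \<lfloor>exp E\<rfloor>" and "real (nat \<lfloor>exp E\<rfloor>) \<le> exp E"
    and "E - 1 \<le> ln (real (nat \<lfloor>exp E\<rfloor>))"
proof -
  have e1: "1 \<le> exp E" using assms by simp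
  thus "1 \<le> nat \<lfloor>exp E\<rfloor>" and "real (nat \<lfloor>exp E\<rfloor>) \<le> exp E" by linarith+
  have "exp E / 2 \<le> real_of_int \<lfloor>exp E\<rfloor>"
  proof (cases "exp E < 2")
    case True
    hence "\<lfloor>exp E\<rfloor> = 1" using e1 by linarith
    thus ?thesis using True by simp
  next
    case False
    have "real_of_int \<lfloor>exp E\<rfloor> > exp E - 1" by linarith
    thus ?thesis using False by linarith
  qed
  hence "exp E / 2 \<le> real (nat \<lfloor>exp E\<rfloor>)" by linarith
  hence "ln (exp E / 2) \<le> ln (real (nat \<lfloor>exp E\<rfloor>))" by (intro ln_mono) auto
  moreover have "ln (exp E / 2) = E - ln 2" by (simp add: ln_div)
  ultimately show "E - 1 \<le> ln (real (nat \<lfloor>exp E\<rfloor>))" using ln_2_less_1 by linarith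
qed

text \<open>It is Feinstein's lemma with \<open>e\<^sup>E\<close> codewords,
  \<open>E = n R1 + r n\<^sup>\<beta>\<close>, and threshold halfway between \<open>E\<close> and \<open>n R1 + s n\<^sup>\<beta>\<close>; when \<open>E < 0\<close> a
  single codeword already suffices.\<close>
lemma achiev_blocklength:
  fixes p :: "'x pmf" and V :: "'x \<Rightarrow> 'y pmf" and n :: nat and r s :: real
  assumes n: "n \<ge> 1" and rs: "r < s" and sub: "set_pmf p \<subseteq> S"
  shows "\<exists>\<Phi>. is_code_in S \<Phi> \<and>
     r - 1 / real n powr \<beta> \<le> (ln (real (code_size \<Phi>)) - real n * R1) / real n powr \<beta> \<and>
     err_prob V \<Phi> \<le> spectrum_prob \<beta> V p (bind_pmf p V) n s R1 + exp (- ((s - r) * real n powr \<beta> / 2))"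
proof -
  define b where "b = real n powr \<beta>"
  define E where "E = real n * R1 + r * b"
  define F where "F = spectrum_prob \<beta> V p (bind_pmf p V) n s R1"
  have b: "b > 0" using n unfolding b_def by simp
  have rate: "r - 1 / b \<le> (ln N - real n * R1) / b" if "E - 1 \<le> ln N" for N
  proof -
    have "(r * b - 1) / b \<le> (ln N - real n * R1) / b"
      using that b unfolding E_def by (intro divide_right_mono) auto
    thus ?thesis using b by (simp add: field_simps)
  qed
  have slack: "0 \<le> F + exp (- ((s - r) * b / 2))"
    unfolding F_def using spectrum_prob_nonneg by (intro add_nonneg_nonneg) auto
  show ?thesis
  proof (cases "E < 0")
    case True
    obtain x0 where "x0 \<in> set_pmf p" using set_pmf_not_empty[of p] by blast
    hence x0: "x0 \<in> S" using sub by blast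
    define \<Phi> where "\<Phi> = (1::nat, \<lambda>_::nat. x0, \<lambda>_::nat. UNIV :: 'y set)"
    have "r - 1 / b \<le> (ln (real (code_size \<Phi>)) - real n * R1) / b"
      using rate[of 1] True unfolding \<Phi>_def by (simp add: code_size_def)
    moreover have "err_prob V \<Phi> \<le> F + exp (- ((s - r) * b / 2))"
      using slack unfolding \<Phi>_def by (simp add: err_prob_def)
    ultimately show ?thesis unfolding b_def[symmetric] F_def[symmetric]
      using single_codeword_code[OF x0] unfolding \<Phi>_def by blast
  next
    case False
    define M where "M = nat \<lfloor>exp E\<rfloor>"
    define a where "a = E + (s - r) * b / 2"
    obtain \<phi> D where img: "\<phi> ` {1..M} \<subseteq> set_pmf p"
      and disj: "\<forall>i\<in>{1..M}. \<forall>j\<in>{1..M}. i \<noteq> j \<longrightarrow> D i \<inter> D j = {}"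
      and good: "\<forall>i\<in>{1..M}. 1 - (low_density_prob p V a + real M * exp (-a))
                   \<le> measure_pmf.prob (V (\<phi> i)) (D i)"
      using feinstein[where p=p and V=V and a=a and M=M] by blast
    have M1: "1 \<le> M" and ME: "real M \<le> exp E" and lnM: "E - 1 \<le> ln (real M)"
      using floor_exp_bounds[of E] False unfolding M_def by auto
    have "r * b < s * b" using rs b by simp
    hence "a < real n * R1 + s * real n powr \<beta>"
      unfolding a_def E_def b_def by (simp add: field_simps)
    hence "low_density_prob p V a \<le> F"
      unfolding F_def by (rule low_density_prob_le_spectrum[OF n])
    moreover have "real M * exp (-a) \<le> exp (- ((s - r) * b / 2))"
    proof -
      have "real M * exp (-a) \<le> exp E * exp (-a)" using ME by simp
      also have "\<dots> = exp (- ((s - r) * b / 2))" unfolding a_def by (simp add: exp_add[symmetric])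
      finally show ?thesis .
    qed
    ultimately have "err_prob V (M, \<phi>, D) \<le> F + exp (- ((s - r) * b / 2))"
      using err_prob_le_max[where V=V and \<phi>=\<phi> and D=D, OF M1 good] by linarith
    moreover have "is_code_in S (M, \<phi>, D)"
      using img disj sub M1 unfolding is_code_in_def by auto
    ultimately show ?thesis unfolding b_def[symmetric] F_def[symmetric]
      using rate[OF lnM] by (intro exI[of _ "(M, \<phi>, D)"]) (simp add: code_size_def)
  qed
qed

lemma powr_seq_at_top:
  assumes "(0::real) < \<beta>"
  shows "filterlim (\<lambda>n::nat. real n powr \<beta>) at_top sequentially"
  by (rule filterlim_compose[OF real_powr_at_top[OF assms] filterlim_real_sequentially])

lemma exp_neg_tendsto0:
  fixes x :: "'a \<Rightarrow> real"
  assumes "filterlim x at_top F"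
  shows "((\<lambda>n. exp (- x n)) \<longlongrightarrow> 0) F"
proof -
  have "filterlim (\<lambda>n. - x n) at_bot F" using assms by (rule filterlim_uminus_at_top[THEN iffD1])
  thus ?thesis by (rule filterlim_compose[OF exp_at_bot])
qed

lemma limsup_le_add_vanish:
  fixes a u v :: "nat \<Rightarrow> real"
  assumes v: "v \<longlonglongrightarrow> 0" and ev: "\<forall>\<^sub>F n in sequentially. a n \<le> u n + v n"
  shows "limsup (\<lambda>n. ereal (a n)) \<le> limsup (\<lambda>n. ereal (u n))"
proof -
  have "limsup (\<lambda>n. ereal (a n)) \<le> limsup (\<lambda>n. ereal (u n) + ereal (v n))"
    by (rule Limsup_mono) (rule eventually_mono[OF ev], simp)
  also have "\<dots> \<le> limsup (\<lambda>n. ereal (u n)) + limsup (\<lambda>n. ereal (v n))"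
    by (rule ereal_limsup_add_mono)
  also have "limsup (\<lambda>n. ereal (v n)) = 0"
    using lim_imp_Limsup[OF trivial_limit_sequentially, of "\<lambda>n. ereal (v n)" 0] v
    by (simp add: zero_ereal_def tendsto_ereal)
  finally show ?thesis by simp
qed

lemma code_rate_lower_bound:
  assumes \<beta>: "0 < \<beta>" and rlim: "r \<longlonglongrightarrow> R"
    and rate: "\<And>n. n \<ge> 1 \<Longrightarrow>
      r n - 1 / real n powr \<beta> \<le> (ln (real (code_size (\<Phi> n))) - real n * R1) / real n powr \<beta>"
  shows "ereal R \<le> code_rate \<beta> R1 \<Phi>"
proof -
  have lim: "(\<lambda>n. r n - inverse (real n powr \<beta>)) \<longlonglongrightarrow> R - 0"
    by (intro tendsto_diff rlim tendsto_inverse_0_at_top powr_seq_at_top \<beta>)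
  have "ereal R = liminf (\<lambda>n. ereal (r n - inverse (real n powr \<beta>)))"
    using lim_imp_Liminf[OF trivial_limit_sequentially, of "\<lambda>n. ereal (r n - inverse (real n powr \<beta>))" "ereal R"] lim
    by (simp add: tendsto_ereal)
  also have "\<dots> \<le> code_rate \<beta> R1 \<Phi>"
    unfolding code_rate_def
  proof (rule Liminf_mono)
    show "\<forall>\<^sub>F n in sequentially. ereal (r n - inverse (real n powr \<beta>))
        \<le> ereal ((ln (real (code_size (\<Phi> n))) - real n * R1) / real n powr \<beta>)"
      using eventually_ge_at_top[of 1] by eventually_elim (simp add: inverse_eq_divide rate)
  qed
  finally show ?thesis .
qed

lemma achiev_asym:
  fixes W :: "nat \<Rightarrow> 'x \<Rightarrow> 'y pmf" and r s :: "nat \<Rightarrow> real"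
  assumes \<beta>: "0 < \<beta>" and P: "P \<in> Pck X c K" and rs: "\<And>n. r n < s n"
    and gap: "filterlim (\<lambda>n. (s n - r n) * real n powr \<beta>) at_top sequentially"
    and rlim: "r \<longlonglongrightarrow> R"
  shows "\<exists>\<Phi>\<in>admissible_codes X c K. ereal R \<le> code_rate \<beta> R1 \<Phi> \<and>
     code_err W \<Phi> \<le> limsup (\<lambda>n. ereal (spectrum_prob \<beta> (W n) (P n) (out_dist W P n) n (s n) R1))"
proof -
  define F where "F = (\<lambda>n. spectrum_prob \<beta> (W n) (P n) (out_dist W P n) n (s n) R1)"
  define slack where "slack = (\<lambda>n. exp (- ((s n - r n) * real n powr \<beta> / 2)))"
  have sub: "set_pmf (P n) \<subseteq> Xnck X c K n" for n using P unfolding Pck_def by auto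
  have "\<exists>\<Psi>. is_code_in (Xnck X c K n) \<Psi> \<and> (n \<ge> 1 \<longrightarrow>
      r n - 1 / real n powr \<beta> \<le> (ln (real (code_size \<Psi>)) - real n * R1) / real n powr \<beta> \<and>
      err_prob (W n) \<Psi> \<le> F n + slack n)" for n
  proof (cases "n \<ge> 1")
    case True
    from achiev_blocklength[OF True rs sub, where V="W n" and \<beta>=\<beta> and ?R1.0=R1]
    show ?thesis unfolding F_def slack_def out_dist_def using True by blast
  next
    case False
    obtain x0 where "x0 \<in> set_pmf (P n)" using set_pmf_not_empty[of "P n"] by blast
    hence "is_code_in (Xnck X c K n) (1, \<lambda>_. x0, \<lambda>_. UNIV)"
      using sub by (intro single_codeword_code) blast
    thus ?thesis using False by blast
  qed
  then obtain \<Phi> where code: "\<And>n. is_code_in (Xnck X c K n) (\<Phi> n)"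
    and rate: "\<And>n. n \<ge> 1 \<Longrightarrow>
      r n - 1 / real n powr \<beta> \<le> (ln (real (code_size (\<Phi> n))) - real n * R1) / real n powr \<beta>"
    and err: "\<And>n. n \<ge> 1 \<Longrightarrow> err_prob (W n) (\<Phi> n) \<le> F n + slack n"
    by metis
  have "filterlim (\<lambda>n. 1/2 * ((s n - r n) * real n powr \<beta>)) at_top sequentially"
    by (rule filterlim_tendsto_pos_mult_at_top[OF tendsto_const _ gap]) simp
  hence "slack \<longlonglongrightarrow> 0" unfolding slack_def by (intro exp_neg_tendsto0) simp
  hence "code_err W \<Phi> \<le> limsup (\<lambda>n. ereal (F n))"
    unfolding code_err_def
  proof (rule limsup_le_add_vanish)
    show "\<forall>\<^sub>F n in sequentially. err_prob (W n) (\<Phi> n) \<le> F n + slack n"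
      using eventually_ge_at_top[of 1] by eventually_elim (rule err)
  qed
  moreover have "\<Phi> \<in> admissible_codes X c K" using code unfolding admissible_codes_def by simp
  ultimately show ?thesis
    using code_rate_lower_bound[OF \<beta> rlim rate] unfolding F_def by blast
qed

lemma codeword_pmf_Pck:
  assumes "\<Phi> \<in> admissible_codes X c K"
  shows "(\<lambda>n. codeword_pmf (\<Phi> n)) \<in> Pck X c K"
  unfolding Pck_def
proof (intro CollectI allI)
  fix n
  obtain N \<phi> D where e: "\<Phi> n = (N, \<phi>, D)" by (cases "\<Phi> n") auto
  have "is_code_in (Xnck X c K n) (\<Phi> n)" using assms unfolding admissible_codes_def by simp
  hence "is_code_in (Xnck X c K n) (N, \<phi>, D)" using e by simp
  hence "N \<ge> 1" "\<phi> ` {1..N} \<subseteq> Xnck X c K n" unfolding is_code_in_def by auto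
  thus "set_pmf (codeword_pmf (\<Phi> n)) \<subseteq> Xnck X c K n" unfolding codeword_pmf_def e by simp
qed

text \<open>For a code sequence of asymptotic rate at least \<open>R\<close>, the information spectrum of its
  codeword distributions at \<open>R - \<delta>\<close> w.r.t. any output laws \<open>Q\<close> is bounded by its error:
  the term \<open>exp (n R1 + (R - \<delta>) n\<^sup>\<beta>) / N\<close> of the Verd\'u--Han bound is eventually at most
  \<open>exp (-\<delta> n\<^sup>\<beta> / 2)\<close>.\<close>
lemma converse_asym:
  fixes W :: "nat \<Rightarrow> 'x \<Rightarrow> 'y pmf" and Q :: "nat \<Rightarrow> 'y pmf"
  assumes \<beta>: "0 < \<beta>" and adm: "\<Phi> \<in> admissible_codes X c K"
    and rate: "ereal R \<le> code_rate \<beta> R1 \<Phi>" and \<delta>: "0 < \<delta>"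
  shows "Jp \<beta> W (\<lambda>n. codeword_pmf (\<Phi> n)) Q (R - \<delta>) R1 \<le> code_err W \<Phi>"
proof -
  define b where "b = (\<lambda>n::nat. real n powr \<beta>)"
  have "ereal (R - \<delta>/2) < ereal R" using \<delta> by simp
  hence "ereal (R - \<delta>/2) < code_rate \<beta> R1 \<Phi>" using rate by (rule less_le_trans)
  hence rate_ev: "\<forall>\<^sub>F n in sequentially.
      ereal (R - \<delta>/2) < ereal ((ln (real (code_size (\<Phi> n))) - real n * R1) / b n)"
    unfolding code_rate_def b_def by (rule less_LiminfD)
  have "\<forall>\<^sub>F n in sequentially.
     spectrum_prob \<beta> (W n) (codeword_pmf (\<Phi> n)) (Q n) n (R - \<delta>) R1
     \<le> err_prob (W n) (\<Phi> n) + exp (- (\<delta> / 2 * b n))"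
    using rate_ev eventually_ge_at_top[of 1]
  proof eventually_elim
    case (elim n)
    obtain N \<phi> D where e: "\<Phi> n = (N, \<phi>, D)" by (cases "\<Phi> n") auto
    have "is_code_in (Xnck X c K n) (\<Phi> n)" using adm unfolding admissible_codes_def by simp
    hence code: "is_code_in (Xnck X c K n) (N, \<phi>, D)" using e by simp
    hence N1: "N \<ge> 1" unfolding is_code_in_def by auto
    have "b n > 0" using elim(2) unfolding b_def by simp
    hence lt: "(R - \<delta>/2) * b n < ln (real N) - real n * R1"
      using elim(1) e by (simp add: code_size_def pos_less_divide_eq)
    have "spectrum_prob \<beta> (W n) (codeword_pmf (N, \<phi>, D)) (Q n) n (R - \<delta>) R1
       \<le> err_prob (W n) (N, \<phi>, D) + exp (real n * R1 + (R - \<delta>) * b n) / real N"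
      using converse_blocklength[OF elim(2) code] unfolding b_def .
    also have "exp (real n * R1 + (R - \<delta>) * b n) / real N
        = exp (real n * R1 + (R - \<delta>) * b n - ln (real N))"
      using N1 by (simp add: exp_diff)
    also have "\<dots> \<le> exp (- (\<delta> / 2 * b n))"
      using lt by (simp add: algebra_simps)
    finally show ?case using e by simp
  qed
  moreover have "filterlim (\<lambda>n. \<delta> / 2 * b n) at_top sequentially"
    unfolding b_def using \<delta>
    by (intro filterlim_tendsto_pos_mult_at_top[OF tendsto_const _ powr_seq_at_top[OF \<beta>]]) auto
  hence "(\<lambda>n. exp (- (\<delta> / 2 * b n))) \<longlonglongrightarrow> 0" by (rule exp_neg_tendsto0)
  ultimately show ?thesis
    unfolding Jp_spectrum_prob code_err_def by (intro limsup_le_add_vanish)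
qed

subsection \<open>The limit \<open>\<gamma> \<down> 0\<close> and the diagonal argument\<close>

lemma Lim_antitone:
  fixes g :: "real \<Rightarrow> ereal"
  assumes mono: "\<And>x y. 0 < x \<Longrightarrow> x \<le> y \<Longrightarrow> g y \<le> g x"
  shows "Lim (at_right 0) g = (SUP x\<in>{0<..}. g x)"
proof (rule tendsto_Lim[OF trivial_limit_at_right_real], rule order_tendstoI)
  fix a assume "a < (SUP x\<in>{0<..}. g x)"
  then obtain x0 where x0: "x0 > 0" "a < g x0" by (auto simp: less_SUP_iff)
  show "\<forall>\<^sub>F x in at_right 0. a < g x"
    using eventually_at_right_real[OF x0(1)]
    by eventually_elim (use mono x0 in \<open>auto intro: less_le_trans\<close>)
next
  fix a assume a: "(SUP x\<in>{0<..}. g x) < a"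
  show "\<forall>\<^sub>F x in at_right 0. g x < a"
    using eventually_at_right_less[of 0]
    by eventually_elim (use a in \<open>auto intro: le_less_trans[OF SUP_upper]\<close>)
qed

text \<open>Since \<open>Jp\<close> is monotone in the threshold, the limits \<open>\<gamma> \<down> 0\<close> in the theorem are suprema.\<close>
lemma Lim_Jp_eq:
  "Lim (at_right (0::real)) (\<lambda>\<gamma>. Jp \<beta> W P Q (R2 - \<gamma>) R1) = (SUP \<gamma>\<in>{0<..}. Jp \<beta> W P Q (R2 - \<gamma>) R1)"
  by (rule Lim_antitone) (rule Jp_mono, simp)

lemma Lim_Ip_eq:
  "Lim (at_right (0::real)) (\<lambda>\<gamma>. Ip \<beta> W P (R2 - \<gamma>) R1) = (SUP \<gamma>\<in>{0<..}. Ip \<beta> W P (R2 - \<gamma>) R1)"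
  unfolding Ip_def by (rule Lim_Jp_eq)

text \<open>Given thresholds \<open>N k\<close>, a sequence \<open>\<kappa> \<longrightarrow> \<infinity>\<close> such that \<open>N (\<kappa> n) \<le> n\<close> for large \<open>n\<close>:
  \<open>\<kappa> n\<close> is the largest \<open>k \<le> n\<close> all of whose predecessors' thresholds are already passed.\<close>
lemma diag_index:
  fixes N :: "nat \<Rightarrow> nat"
  shows "\<exists>\<kappa>::nat \<Rightarrow> nat. filterlim \<kappa> at_top sequentially \<and> (\<forall>n\<ge>N 0. N (\<kappa> n) \<le> n)"
proof -
  define T where "T = (\<lambda>n. {k. k \<le> n \<and> (\<forall>j\<le>k. N j \<le> n)})"
  define \<kappa> where "\<kappa> = (\<lambda>n. Max (T n))"
  have fin: "finite (T n)" for n unfolding T_def by auto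
  have mem: "m \<in> T n \<Longrightarrow> m \<le> \<kappa> n" for m n unfolding \<kappa>_def using fin by simp
  show ?thesis
  proof (intro exI conjI allI impI)
    fix n assume "N 0 \<le> n"
    hence "0 \<in> T n" unfolding T_def by simp
    hence "\<kappa> n \<in> T n" unfolding \<kappa>_def using fin by (intro Max_in) auto
    thus "N (\<kappa> n) \<le> n" unfolding T_def by simp
  next
    show "filterlim \<kappa> at_top sequentially"
      unfolding filterlim_at_top
    proof
      fix m
      show "\<forall>\<^sub>F n in sequentially. m \<le> \<kappa> n"
        using eventually_ge_at_top[of "max m (Max (N ` {..m}))"]
      proof eventually_elim
        case (elim n)
        have "N j \<le> n" if "j \<le> m" for j
          using that elim Max_ge[of "N ` {..m}" "N j"] by auto
        hence "m \<in> T n" unfolding T_def using elim by simp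
        thus ?case by (rule mem)
      qed
    qed
  qed
qed

text \<open>Any positive null sequence \<open>\<delta>\<close> can be enlarged to a null sequence \<open>\<gamma>\<close> that vanishes
  slowly enough for \<open>\<gamma> n \<cdot> n\<^sup>\<beta> \<longrightarrow> \<infinity>\<close> (take \<open>\<gamma> n = max (\<delta> n) (n\<^sup>-\<^sup>\<beta>\<^sup>/\<^sup>2)\<close>).\<close>
lemma slow_null_majorant:
  fixes \<delta> :: "nat \<Rightarrow> real"
  assumes \<beta>: "0 < \<beta>" and \<delta>: "\<delta> \<longlonglongrightarrow> 0" "\<And>n. 0 < \<delta> n"
  shows "\<exists>\<gamma>. (\<forall>n. 0 < \<gamma> n \<and> \<delta> n \<le> \<gamma> n) \<and> \<gamma> \<longlonglongrightarrow> 0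
            \<and> filterlim (\<lambda>n. \<gamma> n * real n powr \<beta>) at_top sequentially"
proof -
  define \<gamma> where "\<gamma> = (\<lambda>n. max (\<delta> n) (inverse (real n powr (\<beta>/2))))"
  have "(\<lambda>n. inverse (real n powr (\<beta>/2))) \<longlonglongrightarrow> 0"
    by (rule tendsto_inverse_0_at_top[OF powr_seq_at_top]) (use \<beta> in simp)
  hence "\<gamma> \<longlonglongrightarrow> 0" using tendsto_max[OF \<delta>(1)] unfolding \<gamma>_def by fastforce
  moreover have "filterlim (\<lambda>n. \<gamma> n * real n powr \<beta>) at_top sequentially"
  proof (rule filterlim_at_top_mono[OF powr_seq_at_top[of "\<beta>/2"]])
    show "\<forall>\<^sub>F n in sequentially. real n powr (\<beta> / 2) \<le> \<gamma> n * real n powr \<beta>"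
      using eventually_ge_at_top[of 1]
    proof eventually_elim
      case (elim n)
      define a where "a = real n powr (\<beta>/2)"
      have a: "a > 0" using elim unfolding a_def by simp
      have "a = inverse a * (a * a)" using a by (simp add: field_simps)
      also have "\<dots> \<le> \<gamma> n * (a * a)"
        using a by (intro mult_right_mono) (auto simp: \<gamma>_def a_def)
      also have "a * a = real n powr \<beta>" unfolding a_def by (simp add: powr_add[symmetric])
      finally show ?case unfolding a_def .
    qed
  qed (use \<beta> in simp)
  moreover have "0 < \<gamma> n \<and> \<delta> n \<le> \<gamma> n" for n
    using \<delta>(2)[of n] unfolding \<gamma>_def by auto
  ultimately show ?thesis by blast
qed

text \<open>Diagonal achievability: if \<open>lim\<^sub>\<gamma>\<^sub>\<down>\<^sub>0 Ip (R2 - \<gamma>) < e\<close>, then for each fixed \<open>\<gamma> = 1/(k+1)\<close>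
  the information spectrum is eventually below \<open>e\<close>; letting the slack shrink along a
  diagonal sequence and applying asymptotic achievability gives codes of rate \<open>R2\<close> and
  error at most \<open>e\<close>.\<close>
lemma achiev_diag:
  fixes W :: "nat \<Rightarrow> 'x \<Rightarrow> 'y pmf"
  assumes \<beta>: "0 < \<beta>" and P: "P \<in> Pck X c K"
    and L: "(SUP \<gamma>\<in>{0<..}. Ip \<beta> W P (R2 - \<gamma>) R1) < ereal e"
  shows "\<exists>\<Phi>\<in>admissible_codes X c K. ereal R2 \<le> code_rate \<beta> R1 \<Phi> \<and> code_err W \<Phi> \<le> ereal e"
proof -
  define f where "f = (\<lambda>n t. spectrum_prob \<beta> (W n) (P n) (out_dist W P n) n t R1)"
  have "\<exists>N. \<forall>n\<ge>N. f n (R2 - inverse (real (Suc k))) < e" for k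
  proof -
    have "Ip \<beta> W P (R2 - inverse (real (Suc k))) R1 \<le> (SUP \<gamma>\<in>{0<..}. Ip \<beta> W P (R2 - \<gamma>) R1)"
      by (rule SUP_upper) simp
    hence "limsup (\<lambda>n. ereal (f n (R2 - inverse (real (Suc k))))) < ereal e"
      using L unfolding Ip_def Jp_spectrum_prob f_def by (rule le_less_trans)
    hence "\<forall>\<^sub>F n in sequentially. ereal (f n (R2 - inverse (real (Suc k)))) < ereal e"
      by (rule Limsup_lessD)
    thus ?thesis unfolding eventually_sequentially by simp
  qed
  then obtain N where N: "\<And>k n. N k \<le> n \<Longrightarrow> f n (R2 - inverse (real (Suc k))) < e"
    by metis
  obtain \<kappa> where \<kappa>: "filterlim \<kappa> at_top sequentially" "\<And>n. N 0 \<le> n \<Longrightarrow> N (\<kappa> n) \<le> n"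
    using diag_index[of N] by blast
  have "(\<lambda>n. inverse (real (Suc (\<kappa> n)))) \<longlonglongrightarrow> 0"
    by (rule filterlim_compose[OF LIMSEQ_inverse_real_of_nat \<kappa>(1)])
  then obtain \<gamma> where \<gamma>: "\<And>n. 0 < \<gamma> n" "\<And>n. inverse (real (Suc (\<kappa> n))) \<le> \<gamma> n"
    and \<gamma>_lim: "\<gamma> \<longlonglongrightarrow> 0" and \<gamma>_slow: "filterlim (\<lambda>n. \<gamma> n * real n powr \<beta>) at_top sequentially"
    using slow_null_majorant[OF \<beta>, of "\<lambda>n. inverse (real (Suc (\<kappa> n)))"] by auto
  have rs: "R2 - 2 * \<gamma> n < R2 - \<gamma> n" for n using \<gamma>(1)[of n] by simp
  have gap: "filterlim (\<lambda>n. ((R2 - \<gamma> n) - (R2 - 2 * \<gamma> n)) * real n powr \<beta>) at_top sequentially"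
    using \<gamma>_slow by simp
  have "(\<lambda>n. R2 - 2 * \<gamma> n) \<longlonglongrightarrow> R2 - 2 * 0"
    by (intro tendsto_intros \<gamma>_lim)
  hence "(\<lambda>n. R2 - 2 * \<gamma> n) \<longlonglongrightarrow> R2" by simp
  then obtain \<Phi> where \<Phi>: "\<Phi> \<in> admissible_codes X c K" "ereal R2 \<le> code_rate \<beta> R1 \<Phi>"
    and err: "code_err W \<Phi> \<le> limsup (\<lambda>n. ereal (f n (R2 - \<gamma> n)))"
    using achiev_asym[OF \<beta> P rs gap, where W=W and ?R1.0=R1] unfolding f_def by blast
  have "limsup (\<lambda>n. ereal (f n (R2 - \<gamma> n))) \<le> ereal e"
  proof (rule Limsup_bounded)
    show "\<forall>\<^sub>F n in sequentially. ereal (f n (R2 - \<gamma> n)) \<le> ereal e"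
      using eventually_ge_at_top[of "N 0"]
    proof eventually_elim
      case (elim n)
      have "f n (R2 - \<gamma> n) \<le> f n (R2 - inverse (real (Suc (\<kappa> n))))"
        unfolding f_def by (rule spectrum_prob_mono) (use \<gamma>(2)[of n] in simp)
      also have "\<dots> < e" by (rule N[OF \<kappa>(2)[OF elim]])
      finally show ?case by simp
    qed
  qed
  thus ?thesis using \<Phi> err by (intro bexI[of _ \<Phi>] conjI) (auto intro: order_trans)
qed

subsection \<open>The optimal error probability \<open>Cp\<close>\<close>

lemma Cp_le_code_err:
  assumes "\<Phi> \<in> admissible_codes X c K" and "ereal R2 \<le> code_rate \<beta> R1 \<Phi>"
  shows "Cp \<beta> W X c K R2 R1 \<le> code_err W \<Phi>"
  unfolding Cp_def by (rule Inf_lower) (use assms in blast)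

lemma Cp_le_Ip_limit:
  assumes \<beta>: "0 < \<beta>" and P: "P \<in> Pck X c K"
  shows "Cp \<beta> W X c K R2 R1 \<le> (SUP \<gamma>\<in>{0<..}. Ip \<beta> W P (R2 - \<gamma>) R1)"
proof (rule ereal_le_real)
  fix z assume z: "(SUP \<gamma>\<in>{0<..}. Ip \<beta> W P (R2 - \<gamma>) R1) \<le> ereal z"
  show "Cp \<beta> W X c K R2 R1 \<le> ereal z"
  proof (rule ereal_le_epsilon2)
    fix e :: real assume "0 < e"
    hence "(SUP \<gamma>\<in>{0<..}. Ip \<beta> W P (R2 - \<gamma>) R1) < ereal (z + e)"
      using z by (auto intro: le_less_trans)
    then obtain \<Phi> where "\<Phi> \<in> admissible_codes X c K" "ereal R2 \<le> code_rate \<beta> R1 \<Phi>"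
      and "code_err W \<Phi> \<le> ereal (z + e)"
      using achiev_diag[OF \<beta> P] by blast
    thus "Cp \<beta> W X c K R2 R1 \<le> ereal z + ereal e"
      using Cp_le_code_err by (fastforce intro: order_trans)
  qed
qed

text \<open>Converse half: the codeword distributions of any good code sequence form an admissible
  input process whose \<open>Jp\<close>-limit, for every output process, is at most the code's error.\<close>
lemma Jp_limit_le_Cp:
  fixes W :: "nat \<Rightarrow> 'x \<Rightarrow> 'y pmf"
  assumes \<beta>: "0 < \<beta>"
  shows "(INF P\<in>Pck X c K. SUP Q. SUP \<gamma>\<in>{0<..}. Jp \<beta> W P Q (R2 - \<gamma>) R1) \<le> Cp \<beta> W X c K R2 R1"
  unfolding Cp_def
proof (rule Inf_greatest, safe)
  fix \<Phi> :: "nat \<Rightarrow> ('x, 'y) code"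
  assume adm: "\<Phi> \<in> admissible_codes X c K" and rate: "ereal R2 \<le> code_rate \<beta> R1 \<Phi>"
  have "(INF P\<in>Pck X c K. SUP Q. SUP \<gamma>\<in>{0<..}. Jp \<beta> W P Q (R2 - \<gamma>) R1)
      \<le> (SUP Q. SUP \<gamma>\<in>{0<..}. Jp \<beta> W (\<lambda>n. codeword_pmf (\<Phi> n)) Q (R2 - \<gamma>) R1)"
    by (rule INF_lower) (rule codeword_pmf_Pck[OF adm])
  also have "\<dots> \<le> code_err W \<Phi>"
    using converse_asym[OF \<beta> adm rate] by (intro SUP_least) simp
  finally show "(INF P\<in>Pck X c K. SUP Q. SUP \<gamma>\<in>{0<..}. Jp \<beta> W P Q (R2 - \<gamma>) R1) \<le> code_err W \<Phi>" .
qed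

text \<open>Both formulas for \<open>Cp\<close>, with the limits \<open>\<gamma> \<down> 0\<close> written as suprema; the middle
  quantity is sandwiched because \<open>Ip\<close> is \<open>Jp\<close> at the output process \<open>Q = W\<^sub>P\<close>.\<close>
lemma Cp_characterization:
  assumes \<beta>: "0 < \<beta>"
  shows "Cp \<beta> W X c K R2 R1 = (INF P\<in>Pck X c K. SUP \<gamma>\<in>{0<..}. Ip \<beta> W P (R2 - \<gamma>) R1)"
    and "Cp \<beta> W X c K R2 R1 = (INF P\<in>Pck X c K. SUP Q. SUP \<gamma>\<in>{0<..}. Jp \<beta> W P Q (R2 - \<gamma>) R1)"
proof -
  have upper: "Cp \<beta> W X c K R2 R1 \<le> (INF P\<in>Pck X c K. SUP \<gamma>\<in>{0<..}. Ip \<beta> W P (R2 - \<gamma>) R1)"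
    by (rule INF_greatest) (rule Cp_le_Ip_limit[OF \<beta>])
  have "(SUP \<gamma>\<in>{0<..}. Ip \<beta> W P (R2 - \<gamma>) R1) \<le> (SUP Q. SUP \<gamma>\<in>{0<..}. Jp \<beta> W P Q (R2 - \<gamma>) R1)"
    for P unfolding Ip_def by (rule SUP_upper) simp
  hence middle: "(INF P\<in>Pck X c K. SUP \<gamma>\<in>{0<..}. Ip \<beta> W P (R2 - \<gamma>) R1)
      \<le> (INF P\<in>Pck X c K. SUP Q. SUP \<gamma>\<in>{0<..}. Jp \<beta> W P Q (R2 - \<gamma>) R1)"
    by (intro INF_mono) blast
  note lower = Jp_limit_le_Cp[OF \<beta>]
  show "Cp \<beta> W X c K R2 R1 = (INF P\<in>Pck X c K. SUP \<gamma>\<in>{0<..}. Ip \<beta> W P (R2 - \<gamma>) R1)"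
    by (rule antisym[OF upper order_trans[OF middle lower]])
  show "Cp \<beta> W X c K R2 R1 = (INF P\<in>Pck X c K. SUP Q. SUP \<gamma>\<in>{0<..}. Jp \<beta> W P Q (R2 - \<gamma>) R1)"
    by (rule antisym[OF order_trans[OF upper middle] lower])
qed

subsection \<open>The \<open>\<epsilon>\<close>-capacity \<open>Ceps\<close>\<close>

lemma code_rate_le_Ceps:
  assumes "\<Phi> \<in> admissible_codes X c K" and "code_err W \<Phi> \<le> ereal \<epsilon>"
  shows "code_rate \<beta> R1 \<Phi> \<le> Ceps \<beta> W X c K \<epsilon> R1"
  unfolding Ceps_def by (rule Sup_upper) (use assms in blast)

lemma ereal_le_from_below:
  assumes "\<And>\<delta>. 0 < \<delta> \<Longrightarrow> ereal (R - \<delta>) \<le> x"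
  shows "ereal R \<le> x"
proof (rule ereal_le_epsilon2)
  fix \<delta> :: real assume "0 < \<delta>"
  hence "ereal (R - \<delta>) + ereal \<delta> \<le> x + ereal \<delta>" by (intro add_right_mono assms)
  thus "ereal R \<le> x + ereal \<delta>" by simp
qed

text \<open>Achievability half: rates \<open>R\<close> with \<open>Ip R \<le> \<epsilon>\<close> are approached by codes with error at most
  \<open>\<epsilon>\<close>, using the fixed thresholds \<open>R - \<delta> < R - \<delta>/2\<close>.\<close>
lemma Ieps_le_Ceps:
  assumes \<beta>: "0 < \<beta>" and P: "P \<in> Pck X c K"
  shows "Ieps \<beta> W P \<epsilon> R1 \<le> Ceps \<beta> W X c K \<epsilon> R1"
  unfolding Ieps_def
proof (rule Sup_least, safe)
  fix R assume IR: "Ip \<beta> W P R R1 \<le> ereal \<epsilon>"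
  show "ereal R \<le> Ceps \<beta> W X c K \<epsilon> R1"
  proof (rule ereal_le_from_below)
    fix \<delta> :: real assume \<delta>: "0 < \<delta>"
    have gap: "filterlim (\<lambda>n. ((R - \<delta>/2) - (R - \<delta>)) * real n powr \<beta>) at_top sequentially"
      using \<delta> by (intro filterlim_tendsto_pos_mult_at_top[OF tendsto_const _ powr_seq_at_top[OF \<beta>]]) auto
    obtain \<Phi> where \<Phi>: "\<Phi> \<in> admissible_codes X c K" "ereal (R - \<delta>) \<le> code_rate \<beta> R1 \<Phi>"
      and err: "code_err W \<Phi> \<le> Ip \<beta> W P (R - \<delta>/2) R1"
      using achiev_asym[OF \<beta> P _ gap tendsto_const, where W=W and ?R1.0=R1] \<delta>
      unfolding Ip_def Jp_spectrum_prob by auto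
    have "Ip \<beta> W P (R - \<delta>/2) R1 \<le> Ip \<beta> W P R R1"
      unfolding Ip_def by (rule Jp_mono) (use \<delta> in simp)
    hence "code_err W \<Phi> \<le> ereal \<epsilon>" using err IR by (auto intro: order_trans)
    thus "ereal (R - \<delta>) \<le> Ceps \<beta> W X c K \<epsilon> R1"
      using code_rate_le_Ceps[OF \<Phi>(1)] \<Phi>(2) by (auto intro: order_trans)
  qed
qed

lemma code_rate_le_Jeps:
  assumes \<beta>: "0 < \<beta>" and adm: "\<Phi> \<in> admissible_codes X c K" and err: "code_err W \<Phi> \<le> ereal \<epsilon>"
  shows "code_rate \<beta> R1 \<Phi> \<le> Jeps \<beta> W (\<lambda>n. codeword_pmf (\<Phi> n)) Q \<epsilon> R1"
proof (rule dense_le)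
  fix z assume z: "z < code_rate \<beta> R1 \<Phi>"
  show "z \<le> Jeps \<beta> W (\<lambda>n. codeword_pmf (\<Phi> n)) Q \<epsilon> R1"
  proof (cases z)
    case (real R)
    have "ereal R \<le> Jeps \<beta> W (\<lambda>n. codeword_pmf (\<Phi> n)) Q \<epsilon> R1"
    proof (rule ereal_le_from_below)
      fix \<delta> :: real assume \<delta>: "0 < \<delta>"
      have "ereal R \<le> code_rate \<beta> R1 \<Phi>" using z real by simp
      hence "Jp \<beta> W (\<lambda>n. codeword_pmf (\<Phi> n)) Q (R - \<delta>) R1 \<le> ereal \<epsilon>"
        using order_trans[OF converse_asym[OF \<beta> adm _ \<delta>] err] by blast
      thus "ereal (R - \<delta>) \<le> Jeps \<beta> W (\<lambda>n. codeword_pmf (\<Phi> n)) Q \<epsilon> R1"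
        unfolding Jeps_def by (intro Sup_upper) blast
    qed
    thus ?thesis using real by simp
  qed (use z in auto)
qed

lemma Ceps_le_Jeps:
  fixes W :: "nat \<Rightarrow> 'x \<Rightarrow> 'y pmf"
  assumes \<beta>: "0 < \<beta>"
  shows "Ceps \<beta> W X c K \<epsilon> R1 \<le> (SUP P\<in>Pck X c K. INF Q. Jeps \<beta> W P Q \<epsilon> R1)"
  unfolding Ceps_def
proof (rule Sup_least, safe)
  fix \<Phi> :: "nat \<Rightarrow> ('x, 'y) code"
  assume adm: "\<Phi> \<in> admissible_codes X c K" and err: "code_err W \<Phi> \<le> ereal \<epsilon>"
  have "code_rate \<beta> R1 \<Phi> \<le> (INF Q. Jeps \<beta> W (\<lambda>n. codeword_pmf (\<Phi> n)) Q \<epsilon> R1)"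
    by (rule INF_greatest) (rule code_rate_le_Jeps[OF \<beta> adm err])
  also have "\<dots> \<le> (SUP P\<in>Pck X c K. INF Q. Jeps \<beta> W P Q \<epsilon> R1)"
    by (rule SUP_upper) (rule codeword_pmf_Pck[OF adm])
  finally show "code_rate \<beta> R1 \<Phi> \<le> (SUP P\<in>Pck X c K. INF Q. Jeps \<beta> W P Q \<epsilon> R1)" .
qed

text \<open>Both formulas for \<open>Ceps\<close>, again by sandwiching: \<open>Jeps\<close> at \<open>Q = W\<^sub>P\<close> is \<open>Ieps\<close>.\<close>
lemma Ceps_characterization:
  assumes \<beta>: "0 < \<beta>"
  shows "Ceps \<beta> W X c K \<epsilon> R1 = (SUP P\<in>Pck X c K. Ieps \<beta> W P \<epsilon> R1)"
    and "Ceps \<beta> W X c K \<epsilon> R1 = (SUP P\<in>Pck X c K. INF Q. Jeps \<beta> W P Q \<epsilon> R1)"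
proof -
  have lower: "(SUP P\<in>Pck X c K. Ieps \<beta> W P \<epsilon> R1) \<le> Ceps \<beta> W X c K \<epsilon> R1"
    by (rule SUP_least) (rule Ieps_le_Ceps[OF \<beta>])
  have "(INF Q. Jeps \<beta> W P Q \<epsilon> R1) \<le> Ieps \<beta> W P \<epsilon> R1" for P
    unfolding Ieps_def Ip_def Jeps_def[symmetric] by (rule INF_lower) simp
  hence middle: "(SUP P\<in>Pck X c K. INF Q. Jeps \<beta> W P Q \<epsilon> R1) \<le> (SUP P\<in>Pck X c K. Ieps \<beta> W P \<epsilon> R1)"
    by (intro SUP_mono) blast
  note upper = Ceps_le_Jeps[OF \<beta>]
  show "Ceps \<beta> W X c K \<epsilon> R1 = (SUP P\<in>Pck X c K. Ieps \<beta> W P \<epsilon> R1)"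
    by (rule antisym[OF order_trans[OF upper middle] lower])
  show "Ceps \<beta> W X c K \<epsilon> R1 = (SUP P\<in>Pck X c K. INF Q. Jeps \<beta> W P Q \<epsilon> R1)"
    by (rule antisym[OF upper order_trans[OF middle lower]])
qed

theorem mainTheorem9:
  fixes W :: "nat \<Rightarrow> 'x::countable \<Rightarrow> 'y::countable pmf"
    and X :: "nat \<Rightarrow> 'x set" and c :: "nat \<Rightarrow> 'x \<Rightarrow> real"
    and K \<beta> R1 R2 :: real
  assumes "0 < \<beta>" and "\<beta> < 1"
    and "\<forall>n. Xnck X c K n \<noteq> {}"
  shows "Cp \<beta> W X c K R2 R1 =
           (INF P\<in>Pck X c K. Lim (at_right (0::real)) (\<lambda>\<gamma>. Ip \<beta> W P (R2 - \<gamma>) R1))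
       \<and> Cp \<beta> W X c K R2 R1 =
           (INF P\<in>Pck X c K. SUP Q. Lim (at_right (0::real)) (\<lambda>\<gamma>. Jp \<beta> W P Q (R2 - \<gamma>) R1))
       \<and> (\<forall>\<epsilon>. 0 \<le> \<epsilon> \<and> \<epsilon> < 1 \<longrightarrow>
            Ceps \<beta> W X c K \<epsilon> R1 = (SUP P\<in>Pck X c K. Ieps \<beta> W P \<epsilon> R1)
          \<and> Ceps \<beta> W X c K \<epsilon> R1 = (SUP P\<in>Pck X c K. INF Q. Jeps \<beta> W P Q \<epsilon> R1))"
  unfolding Lim_Ip_eq Lim_Jp_eq
  by (intro conjI allI impI Cp_characterization[OF assms(1)] Ceps_characterization[OF assms(1)])

end
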